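(* (a) For every $L\in\mathbb{N}$, $\mathcal{C}(L+1)-\mathcal{C}(L)\ge 2$. (b) For every $n\ge 2$ and every $L\in\mathbb{N}$ with $2^n\le L\le 2^n+2^{n-1}-1$, $\mathcal{C}(L+1)-\mathcal{C}(L)\ge 3$.
   Context: Let $\mathcal{A}=\{a,x,y,z\}$ and let $\tau$ be the substitution (monoid morphism on finite words over $\mathcal{A}$) defined by $\tau(a)=axa$, $\tau(x)=y$, $\tau(y)=z$, $\tau(z)=x$. For a finite word $w$, $\mathrm{Sub}(w)$ denotes the set of finite (contiguous) subwords of $w$. Let $\mathrm{Sub}_\tau=\bigcup_{s\in\mathcal{A},\,n\in\mathbb{N}\cup\{0\}}\mathrm{Sub}(\tau^n(s))$. The word complexity is $\mathcal{C}(L)=$ the number of elements of $\mathrm{Sub}_\tau$ of length $L$. *)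

theory Defs
  imports Main
begin

datatype letter = La | Lx | Ly | Lz

fun tau_letter :: "letter \<Rightarrow> letter list" where
  "tau_letter La = [La, Lx, La]"
| "tau_letter Lx = [Ly]"
| "tau_letter Ly = [Lz]"
| "tau_letter Lz = [Lx]"

definition tau :: "letter list \<Rightarrow> letter list" where
  "tau w = concat (map tau_letter w)"

definition Sub :: "'a list \<Rightarrow> 'a list set" where
  "Sub w = {v. \<exists>p s. w = p @ v @ s}"

definition Sub_tau :: "letter list set" where
  "Sub_tau = (\<Union>s. \<Union>n::nat. Sub ((tau ^^ n) [s]))"

definition complexity :: "nat \<Rightarrow> nat" where
  "complexity L = card {v \<in> Sub_tau. length v = L}"

end

theory Submission
  imports Defs
begin

text \<open>
  Iterating \<open>tau\<close> on \<open>a\<close> produces prefixes of the ruler sequence \<open>u 1, u 2, u 3, \<dots>\<close>, where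
  \<open>u n\<close> is obtained from \<open>a\<close> by applying the cycle \<open>a \<mapsto> x \<mapsto> y \<mapsto> z \<mapsto> x\<close> as often as
  the exponent of 2 in \<open>n\<close>. So the factors are exactly the windows of \<open>u\<close>, and off the
  multiples of \<open>2^k\<close> the sequence \<open>u\<close> is \<open>2^k\<close>-periodic. As \<open>C(L+1) - C(L)\<close> is the sum,
  over the factors of length \<open>L\<close>, of their number of right extensions minus one, it suffices
  to exhibit right special factors. The window ending just before position \<open>2^L\<close> recurs
  before \<open>2^(L+1)\<close> and \<open>2^(L+2)\<close>, where it is followed by three different letters. If
  \<open>2^(k+1) \<le> L < 3 * 2^k\<close>, the window ending just before \<open>9 * 2^k\<close> also recurs before
  \<open>10 * 2^k\<close>, with a different successor.
\<close>

instance letter :: finite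
proof
  have "(UNIV :: letter set) \<subseteq> {La, Lx, Ly, Lz}"
    using letter.exhaust by blast
  then show "finite (UNIV :: letter set)" by (rule finite_subset) simp
qed

fun next_letter :: "letter \<Rightarrow> letter" where
  "next_letter La = Lx"
| "next_letter Lx = Ly"
| "next_letter Ly = Lz"
| "next_letter Lz = Lx"

lemma next_letter_neq_La: "next_letter c \<noteq> La"
  by (cases c) auto

lemma next_letter_neq: "next_letter c \<noteq> c"
  by (cases c) auto

lemma funpow_next_letter_eq_La_iff: "(next_letter ^^ n) c = La \<longleftrightarrow> c = La \<and> n = 0"
  by (cases n) (auto simp: next_letter_neq_La)

lemma next_letter_distinct: "c \<noteq> La \<Longrightarrow> distinct [c, next_letter c, next_letter (next_letter c)]"
  by (cases c) auto

lemma funpow_next_letter_3: "c \<noteq> La \<Longrightarrow> (next_letter ^^ 3) c = c"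
  by (cases c) (simp_all add: numeral_eq_Suc)

lemma tau_append: "tau (v @ w) = tau v @ tau w"
  by (simp add: tau_def)

lemma funpow_tau_append: "(tau ^^ n) (v @ w) = (tau ^^ n) v @ (tau ^^ n) w"
  by (induction n) (simp_all add: tau_append)

lemma tau_singleton: "c \<noteq> La \<Longrightarrow> tau [c] = [next_letter c]"
  by (cases c) (simp_all add: tau_def)

lemma funpow_tau_singleton: "c \<noteq> La \<Longrightarrow> (tau ^^ n) [c] = [(next_letter ^^ n) c]"
  by (induction n) (simp_all add: tau_singleton funpow_next_letter_eq_La_iff)

text \<open>The value \<open>ruler 0\<close> is junk: the sequence is indexed from \<open>1\<close>.\<close>
function ruler :: "nat \<Rightarrow> letter" where
  "ruler n = (if n = 0 \<or> odd n then La else next_letter (ruler (n div 2)))"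
  by auto
termination by (relation "measure id") auto

declare ruler.simps [simp del]

lemma ruler_odd: "odd n \<Longrightarrow> ruler n = La"
  by (subst ruler.simps) simp

lemma ruler_double: "1 \<le> n \<Longrightarrow> ruler (2 * n) = next_letter (ruler n)"
  by (subst ruler.simps) simp

lemma ruler_pow2_mult_odd: "odd q \<Longrightarrow> ruler (2 ^ k * q) = (next_letter ^^ k) La"
proof (induction k)
  case 0
  then show ?case by (simp add: ruler_odd)
next
  case (Suc k)
  have "1 \<le> 2 ^ k * q"
    using Suc.prems by (simp add: Suc_leI odd_pos)
  then have "ruler (2 ^ Suc k * q) = next_letter (ruler (2 ^ k * q))"
    by (simp add: ruler_double mult.assoc)
  then show ?case using Suc by simp
qed

lemma ruler_pow2: "ruler (2 ^ k) = (next_letter ^^ k) La"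
  using ruler_pow2_mult_odd[of 1 k] by simp

lemma ruler_periodic: "0 < i \<Longrightarrow> i < 2 ^ k \<Longrightarrow> ruler (2 ^ k * t + i) = ruler i"
proof (induction k arbitrary: i)
  case 0
  then show ?case by simp
next
  case (Suc k)
  show ?case
  proof (cases "even i")
    case True
    then obtain j where j: "i = 2 * j" by blast
    with Suc.prems have "0 < j" "j < 2 ^ k" by auto
    have "ruler (2 ^ Suc k * t + i) = ruler (2 * (2 ^ k * t + j))"
      by (simp add: j algebra_simps)
    also have "\<dots> = next_letter (ruler (2 ^ k * t + j))"
      using \<open>0 < j\<close> by (intro ruler_double) simp
    also have "\<dots> = next_letter (ruler j)"
      using \<open>0 < j\<close> \<open>j < 2 ^ k\<close> Suc.IH by simp
    finally show ?thesis using \<open>0 < j\<close> by (simp add: j ruler_double)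
  next
    case False
    then show ?thesis by (simp add: ruler_odd)
  qed
qed

definition window :: "nat \<Rightarrow> nat \<Rightarrow> letter list" where
  "window i L = map ruler [i..<i + L]"

lemma length_window [simp]: "length (window i L) = L"
  by (simp add: window_def)

lemma nth_window: "j < L \<Longrightarrow> window i L ! j = ruler (i + j)"
  by (simp add: window_def)

lemma window_add: "window i (m + n) = window i m @ window (i + m) n"
  using upt_add_eq_append[of i "i + m" n] by (simp add: window_def add.assoc)

lemma window_Suc: "window i (Suc L) = window i L @ [ruler (i + L)]"
  by (simp add: window_def)

lemma window_shift:
  assumes "\<And>p. i \<le> p \<Longrightarrow> p < i + L \<Longrightarrow> ruler (p + d) = ruler p"
  shows "window (i + d) L = window i L"
proof (rule nth_equalityI)
  fix j
  assume "j < length (window (i + d) L)"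
  then have "j < L" by simp
  then have "ruler (i + d + j) = ruler (i + j)"
    using assms[of "i + j"] by (simp add: algebra_simps)
  then show "window (i + d) L ! j = window i L ! j"
    using \<open>j < L\<close> by (simp add: nth_window)
qed simp

lemma window_periodic: "1 \<le> i \<Longrightarrow> i + L \<le> 2 ^ k \<Longrightarrow> window (i + 2 ^ k * t) L = window i L"
proof (rule window_shift)
  fix p
  assume "1 \<le> i" "i + L \<le> 2 ^ k" "i \<le> p" "p < i + L"
  then have "ruler (2 ^ k * t + p) = ruler p"
    by (intro ruler_periodic) simp_all
  then show "ruler (p + 2 ^ k * t) = ruler p"
    by (simp add: add.commute)
qed

lemma funpow_tau_La: "(tau ^^ n) [La] = window 1 (2 ^ Suc n - 1)"
proof (induction n)
  case 0
  then show ?case by (simp add: window_def ruler_odd)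
next
  case (Suc n)
  define m :: nat where "m = 2 ^ Suc n - 1"
  have "(tau ^^ Suc n) [La] = (tau ^^ n) ([La] @ [Lx] @ [La])"
    by (simp only: funpow_Suc_right comp_def) (simp add: tau_def)
  also have "\<dots> = window 1 m @ [(next_letter ^^ n) Lx] @ window 1 m"
    by (simp only: funpow_tau_append funpow_tau_singleton[of Lx, simplified] Suc.IH m_def)
  also have "(next_letter ^^ n) Lx = ruler (1 + m)"
    using ruler_pow2[of "Suc n"] by (simp add: m_def funpow_swap1)
  also have "window 1 m @ [ruler (1 + m)] @ window 1 m = window 1 (m + (1 + m))"
  proof -
    have "window (1 + m + 1) m = window 1 m"
      using window_periodic[of 1 m "Suc n" 1] by (simp add: m_def)
    then show ?thesis
      by (simp only: window_add) (simp add: window_def)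
  qed
  also have "m + (1 + m) = 2 ^ Suc (Suc n) - 1"
    by (simp add: m_def)
  finally show ?case .
qed

lemma Sub_window: "v \<in> Sub (window i N) \<Longrightarrow> \<exists>j\<ge>i. v = window j (length v)"
proof -
  assume "v \<in> Sub (window i N)"
  then obtain p s where ps: "window i N = p @ v @ s" by (auto simp: Sub_def)
  then have "length (window i N) = length (p @ v @ s)"
    by (rule arg_cong)
  then have "length p + length v \<le> N"
    by simp
  have "v = take (length v) (drop (length p) (window i N))"
    using ps by simp
  also have "\<dots> = window (i + length p) (length v)"
    using \<open>length p + length v \<le> N\<close> by (simp add: window_def drop_map take_map)
  finally show ?thesis by (intro exI[of _ "i + length p"]) simp
qed

lemma window_in_Sub_window: "i \<le> j \<Longrightarrow> j + L \<le> i + N \<Longrightarrow> window j L \<in> Sub (window i N)"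
proof -
  assume "i \<le> j" "j + L \<le> i + N"
  then have "window i N = window i ((j - i) + (L + (i + N - j - L)))"
    by (intro arg_cong[where f = "window i"]) simp
  also have "\<dots> = window i (j - i) @ window j L @ window (j + L) (i + N - j - L)"
    using \<open>i \<le> j\<close> by (simp only: window_add) simp
  finally show ?thesis unfolding Sub_def by blast
qed

lemma Sub_singleton: "v \<in> Sub [c] \<Longrightarrow> v = [] \<or> v = [c]"
  unfolding Sub_def by (auto simp: append_eq_Cons_conv Cons_eq_append_conv)

lemma ex_ruler_eq: "\<exists>p\<ge>1. ruler p = c"
proof -
  have "ruler 2 = Lx"
    using ruler_pow2[of 1] by simp
  then have "ruler 4 = Ly"
    using ruler_double[of 2] by simp
  then have "ruler 8 = Lz"
    using ruler_double[of 4] by simp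
  then show ?thesis
    using ruler_odd[of 1] \<open>ruler 2 = Lx\<close> \<open>ruler 4 = Ly\<close>
    by (cases c) (auto intro: exI[of _ 1] exI[of _ 2] exI[of _ 4] exI[of _ 8])
qed

lemma Sub_tau_iff_window: "v \<in> Sub_tau \<longleftrightarrow> (\<exists>i\<ge>1. v = window i (length v))"
proof
  assume "v \<in> Sub_tau"
  then obtain c n where v: "v \<in> Sub ((tau ^^ n) [c])"
    unfolding Sub_tau_def by blast
  show "\<exists>i\<ge>1. v = window i (length v)"
  proof (cases "c = La")
    case True
    then show ?thesis
      using v Sub_window[of v 1] by (simp add: funpow_tau_La)
  next
    case False
    then have "v = [] \<or> v = [(next_letter ^^ n) c]"
      using v by (simp add: funpow_tau_singleton Sub_singleton)
    moreover obtain p where "p \<ge> 1" "ruler p = (next_letter ^^ n) c"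
      using ex_ruler_eq by blast
    ultimately show ?thesis
      by (auto simp: window_def intro: exI[of _ 1] exI[of _ p])
  qed
next
  assume "\<exists>i\<ge>1. v = window i (length v)"
  then obtain i where "1 \<le> i" and v: "v = window i (length v)" by blast
  define n where "n = i + length v"
  have "n < 2 ^ n" by (rule less_exp)
  then have "i + length v \<le> 1 + (2 ^ Suc n - 1)"
    unfolding n_def power_Suc by linarith
  then have "window i (length v) \<in> Sub (window 1 (2 ^ Suc n - 1))"
    using \<open>1 \<le> i\<close> by (intro window_in_Sub_window) simp_all
  then have "v \<in> Sub ((tau ^^ n) [La])"
    by (subst v) (simp add: funpow_tau_La)
  then show "v \<in> Sub_tau"
    unfolding Sub_tau_def by blast
qed

definition factors :: "nat \<Rightarrow> letter list set" where
  "factors L = {v \<in> Sub_tau. length v = L}"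

definition right_ext :: "letter list \<Rightarrow> letter set" where
  "right_ext v = {c. v @ [c] \<in> Sub_tau}"

lemma complexity_eq_card_factors: "complexity L = card (factors L)"
  by (simp add: complexity_def factors_def)

lemma factors_iff_window: "v \<in> factors L \<longleftrightarrow> (\<exists>i\<ge>1. v = window i L)"
  by (auto simp: factors_def Sub_tau_iff_window)

lemma finite_factors: "finite (factors L)"
proof (rule finite_subset)
  show "factors L \<subseteq> {v. set v \<subseteq> UNIV \<and> length v = L}"
    by (auto simp: factors_def)
qed (rule finite_lists_length_eq[OF finite_UNIV])

lemma ruler_in_right_ext: "1 \<le> i \<Longrightarrow> window i L = v \<Longrightarrow> ruler (i + L) \<in> right_ext v"
  by (auto simp: right_ext_def Sub_tau_iff_window window_Suc[symmetric])

lemma Sub_tau_snocD: "v @ [c] \<in> Sub_tau \<Longrightarrow> v \<in> Sub_tau"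
  by (auto simp: Sub_tau_iff_window window_Suc)

lemma right_ext_nonempty: "v \<in> factors L \<Longrightarrow> right_ext v \<noteq> {}"
  using ruler_in_right_ext by (auto simp: factors_iff_window)

lemma factors_Suc: "factors (Suc L) = (\<Union>v\<in>factors L. (\<lambda>c. v @ [c]) ` right_ext v)"
proof (intro equalityI subsetI)
  fix w
  assume w: "w \<in> factors (Suc L)"
  then obtain v c where "w = v @ [c]"
    by (cases w rule: rev_cases) (auto simp: factors_def)
  with w have "v \<in> factors L" "c \<in> right_ext v"
    by (auto simp: factors_def right_ext_def intro: Sub_tau_snocD)
  with \<open>w = v @ [c]\<close> show "w \<in> (\<Union>v\<in>factors L. (\<lambda>c. v @ [c]) ` right_ext v)"
    by blast
qed (auto simp: factors_def right_ext_def intro: Sub_tau_snocD)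

lemma complexity_Suc: "complexity (Suc L) = (\<Sum>v\<in>factors L. card (right_ext v))"
proof -
  have "complexity (Suc L) = card (\<Union>v\<in>factors L. (\<lambda>c. v @ [c]) ` right_ext v)"
    by (simp add: complexity_eq_card_factors factors_Suc)
  also have "\<dots> = (\<Sum>v\<in>factors L. card ((\<lambda>c. v @ [c]) ` right_ext v))"
  proof (rule card_UN_disjoint[OF finite_factors])
    show "\<forall>v\<in>factors L. \<forall>v'\<in>factors L. v \<noteq> v' \<longrightarrow>
        (\<lambda>c. v @ [c]) ` right_ext v \<inter> (\<lambda>c. v' @ [c]) ` right_ext v' = {}"
      by (auto simp: factors_def)
  qed simp
  also have "\<dots> = (\<Sum>v\<in>factors L. card (right_ext v))"
    by (intro sum.cong refl card_image) (simp add: inj_on_def)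
  finally show ?thesis .
qed

lemma card_plus_sum_excess_le_sum:
  fixes g :: "'a \<Rightarrow> nat"
  assumes "finite A" "V \<subseteq> A" "\<And>a. a \<in> A \<Longrightarrow> 1 \<le> g a"
  shows "card A + (\<Sum>a\<in>V. g a - 1) \<le> (\<Sum>a\<in>A. g a)"
proof -
  have "finite V"
    using assms finite_subset by blast
  have "card A = card (A - V) + card V"
    using assms \<open>finite V\<close> by (simp add: card_Diff_subset card_mono)
  moreover have "(\<Sum>a\<in>V. g a) = (\<Sum>a\<in>V. 1 + (g a - 1))"
  proof (rule sum.cong)
    fix a
    assume "a \<in> V"
    then have "1 \<le> g a" using assms by blast
    then show "g a = 1 + (g a - 1)" by simp
  qed simp
  moreover have "(\<Sum>a\<in>V. 1 + (g a - 1)) = card V + (\<Sum>a\<in>V. g a - 1)"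
    by (simp only: sum.distrib) simp
  moreover have "card (A - V) \<le> (\<Sum>a\<in>A - V. g a)"
    using assms sum_mono[of "A - V" "\<lambda>_. 1" g] by simp
  moreover have "(\<Sum>a\<in>A. g a) = (\<Sum>a\<in>A - V. g a) + (\<Sum>a\<in>V. g a)"
    using assms by (simp add: sum.subset_diff)
  ultimately show ?thesis
    by linarith
qed

lemma complexity_Suc_ge:
  "V \<subseteq> factors L \<Longrightarrow> complexity L + (\<Sum>v\<in>V. card (right_ext v) - 1) \<le> complexity (Suc L)"
  unfolding complexity_eq_card_factors[of L] complexity_Suc
  by (rule card_plus_sum_excess_le_sum)
    (auto simp: finite_factors Suc_le_eq card_gt_0_iff right_ext_nonempty)

lemma one_le_pow2_diff: "1 \<le> 2 ^ L - L"
  using less_exp[of L] by (simp del: less_exp)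

lemma card_right_ext_window_pow2:
  assumes "1 \<le> L"
  shows "3 \<le> card (right_ext (window (2 ^ L - L) L))"
proof -
  define i where "i = 2 ^ L - L"
  define c where "c = (next_letter ^^ L) La"
  have "1 \<le> i" "i + L = 2 ^ L"
    using less_exp[of L] one_le_pow2_diff[of L] by (simp_all add: i_def del: less_exp)
  have ext: "ruler (2 ^ L * m) \<in> right_ext (window i L)" if "1 \<le> m" for m
  proof -
    have "window (i + 2 ^ L * (m - 1)) L = window i L"
      using \<open>1 \<le> i\<close> \<open>i + L = 2 ^ L\<close> by (intro window_periodic) simp_all
    moreover have "i + 2 ^ L * (m - 1) + L = 2 ^ L * m"
      using \<open>i + L = 2 ^ L\<close> \<open>1 \<le> m\<close> by (simp add: algebra_simps mult_eq_if)
    ultimately show ?thesis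
      using \<open>1 \<le> i\<close> ruler_in_right_ext[of "i + 2 ^ L * (m - 1)" L] by simp
  qed
  have "ruler (2 ^ L * 1) = c" "ruler (2 ^ L * 2) = next_letter c"
    "ruler (2 ^ L * 4) = next_letter (next_letter c)"
    using ruler_pow2[of L] ruler_pow2[of "Suc L"] ruler_pow2[of "Suc (Suc L)"]
    by (simp_all add: c_def mult.commute)
  moreover have "ruler (2 ^ L * 1) \<in> right_ext (window i L)"
    "ruler (2 ^ L * 2) \<in> right_ext (window i L)" "ruler (2 ^ L * 4) \<in> right_ext (window i L)"
    using ext[of 1] ext[of 2] ext[of 4] by simp_all
  ultimately have "set [c, next_letter c, next_letter (next_letter c)] \<subseteq> right_ext (window i L)"
    by simp
  have "c \<noteq> La"
    using assms by (simp add: c_def funpow_next_letter_eq_La_iff)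
  then have "3 = card (set [c, next_letter c, next_letter (next_letter c)])"
    using next_letter_distinct[of c] by (simp only: distinct_card) simp
  also have "\<dots> \<le> card (right_ext (window i L))"
    by (intro card_mono finite) fact
  finally show ?thesis
    unfolding i_def .
qed

text \<open>
  In this range the only positions where shifting by \<open>2^k\<close> could change the letter are
  \<open>7 * 2^k\<close> and \<open>8 * 2^k\<close>; there it does not, because the cycle has length 3.
\<close>
lemma ruler_add_pow2:
  assumes "1 \<le> k" "6 * 2 ^ k < p" "p < 9 * 2 ^ k"
  shows "ruler (p + 2 ^ k) = ruler p"
proof (cases "p mod 2 ^ k = 0")
  case False
  define t i where "t = p div 2 ^ k" and "i = p mod 2 ^ k"
  have p: "p = 2 ^ k * t + i"
    by (simp add: t_def i_def)
  have "0 < i" "i < 2 ^ k"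
    using False by (simp_all add: i_def)
  have "ruler (p + 2 ^ k) = ruler (2 ^ k * (t + 1) + i)"
    by (simp add: p algebra_simps)
  also have "\<dots> = ruler i"
    using \<open>0 < i\<close> \<open>i < 2 ^ k\<close> by (rule ruler_periodic)
  also have "ruler i = ruler p"
    using \<open>0 < i\<close> \<open>i < 2 ^ k\<close> by (simp add: p ruler_periodic)
  finally show ?thesis .
next
  case True
  then obtain t where p: "p = 2 ^ k * t"
    by blast
  with assms have "t = 7 \<or> t = 8"
    by auto
  have "ruler (2 ^ k * 7) = (next_letter ^^ k) La" "ruler (2 ^ k * 9) = (next_letter ^^ k) La"
    by (simp_all add: ruler_pow2_mult_odd)
  moreover have "ruler (2 ^ k * 8) = (next_letter ^^ k) La"
    using ruler_pow2[of "3 + k"] funpow_next_letter_3[of "(next_letter ^^ k) La"] assms(1)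
    by (simp add: power_add mult.commute funpow_add funpow_next_letter_eq_La_iff)
  moreover have "p = 2 ^ k * 7 \<and> p + 2 ^ k = 2 ^ k * 8 \<or> p = 2 ^ k * 8 \<and> p + 2 ^ k = 2 ^ k * 9"
    using \<open>t = 7 \<or> t = 8\<close> by (auto simp: p)
  ultimately show ?thesis
    by metis
qed

lemma card_right_ext_window_9_pow2:
  assumes "1 \<le> k" "2 * 2 ^ k \<le> L" "L < 3 * 2 ^ k"
  shows "2 \<le> card (right_ext (window (9 * 2 ^ k - L) L))"
proof -
  define h :: nat where "h = 2 ^ k"
  define i where "i = 9 * h - L"
  have "1 \<le> i" "i + L = 9 * h"
    using assms by (simp_all add: i_def h_def)
  have "window (i + h) L = window i L"
    using assms \<open>i + L = 9 * h\<close> unfolding h_def by (intro window_shift ruler_add_pow2) simp_all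
  then have "ruler (i + h + L) \<in> right_ext (window i L)"
    using \<open>1 \<le> i\<close> by (intro ruler_in_right_ext) simp_all
  moreover have "ruler (i + L) \<in> right_ext (window i L)"
    using \<open>1 \<le> i\<close> by (intro ruler_in_right_ext) simp_all
  moreover have "ruler (i + L) = (next_letter ^^ k) La"
    using \<open>i + L = 9 * h\<close> ruler_pow2_mult_odd[of 9 k] by (simp add: h_def mult.commute)
  moreover have "ruler (i + h + L) = next_letter ((next_letter ^^ k) La)"
  proof -
    have "i + h + L = 2 ^ Suc k * 5"
      using \<open>i + L = 9 * h\<close> by (simp add: h_def)
    then show ?thesis
      using ruler_pow2_mult_odd[of 5 "Suc k"] by simp
  qed
  ultimately have "{(next_letter ^^ k) La, next_letter ((next_letter ^^ k) La)} \<subseteq> right_ext (window i L)"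
    by simp
  have "2 = card {(next_letter ^^ k) La, next_letter ((next_letter ^^ k) La)}"
    using next_letter_neq[of "(next_letter ^^ k) La"] by simp
  also have "\<dots> \<le> card (right_ext (window i L))"
    by (intro card_mono finite) fact
  finally show ?thesis
    unfolding i_def h_def .
qed

lemma window_9_pow2_neq_window_pow2:
  assumes "1 \<le> k" "2 * 2 ^ k \<le> L" "L < 3 * 2 ^ k"
  shows "window (9 * 2 ^ k - L) L \<noteq> window (2 ^ L - L) L"
proof -
  define h :: nat where "h = 2 ^ k"
  define m where "m = L - Suc k"
  have "Suc k < 2 ^ Suc k" by (rule less_exp)
  then have "L = Suc k + m" "1 \<le> m"
    using assms by (simp_all add: m_def)
  have "L < 2 ^ L" by (rule less_exp)
  have "2 ^ L - 2 * h = 2 ^ Suc k * (2 ^ m - 1)"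
    using \<open>L = Suc k + m\<close> by (simp add: h_def power_add right_diff_distrib')
  moreover have "odd ((2::nat) ^ m - 1)"
    using \<open>1 \<le> m\<close> by simp
  ultimately have "window (2 ^ L - L) L ! (L - 2 * h) = next_letter ((next_letter ^^ k) La)"
    using assms \<open>L < 2 ^ L\<close> ruler_pow2_mult_odd[of "2 ^ m - 1" "Suc k"]
    by (simp add: nth_window h_def)
  moreover have "window (9 * 2 ^ k - L) L ! (L - 2 * h) = (next_letter ^^ k) La"
    using assms ruler_pow2_mult_odd[of 7 k] by (simp add: nth_window h_def mult.commute)
  ultimately show ?thesis
    using next_letter_neq by metis
qed

lemma complexity_Suc_ge_2:
  assumes "1 \<le> L"
  shows "complexity L + 2 \<le> complexity (Suc L)"
proof -
  let ?v = "window (2 ^ L - L) L"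
  have "?v \<in> factors L"
    using one_le_pow2_diff[of L] by (auto simp: factors_iff_window)
  then have "complexity L + (card (right_ext ?v) - 1) \<le> complexity (Suc L)"
    using complexity_Suc_ge[of "{?v}" L] by simp
  then show ?thesis
    using card_right_ext_window_pow2[OF assms] by simp
qed

lemma complexity_Suc_ge_3:
  assumes "1 \<le> k" "2 * 2 ^ k \<le> L" "L < 3 * 2 ^ k"
  shows "complexity L + 3 \<le> complexity (Suc L)"
proof -
  let ?v = "window (2 ^ L - L) L" and ?w = "window (9 * 2 ^ k - L) L"
  have "1 \<le> L" "1 \<le> 9 * 2 ^ k - L"
    using assms one_le_power[of "2::nat" k] by linarith+
  then have "{?v, ?w} \<subseteq> factors L"
    using one_le_pow2_diff[of L] by (auto simp: factors_iff_window)
  then have "complexity L + (\<Sum>u\<in>{?v, ?w}. card (right_ext u) - 1) \<le> complexity (Suc L)"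
    by (rule complexity_Suc_ge)
  then show ?thesis
    using window_9_pow2_neq_window_pow2[OF assms] card_right_ext_window_pow2[OF \<open>1 \<le> L\<close>]
      card_right_ext_window_9_pow2[OF assms] by simp
qed

theorem mainTheorem5:
  shows "(\<forall>L::nat. L \<ge> 1 \<longrightarrow> int (complexity (L + 1)) - int (complexity L) \<ge> 2)
       \<and> (\<forall>n L::nat. n \<ge> 2 \<and> 2 ^ n \<le> L \<and> L \<le> 2 ^ n + 2 ^ (n - 1) - 1
            \<longrightarrow> int (complexity (L + 1)) - int (complexity L) \<ge> 3)"
proof (intro conjI allI impI)
  fix L :: nat
  assume "L \<ge> 1"
  then show "int (complexity (L + 1)) - int (complexity L) \<ge> 2"
    using complexity_Suc_ge_2[of L] by simp
next
  fix n L :: nat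
  assume nL: "n \<ge> 2 \<and> 2 ^ n \<le> L \<and> L \<le> 2 ^ n + 2 ^ (n - 1) - 1"
  then obtain k where "n = Suc k" "1 \<le> k"
    by (cases n) auto
  with nL have "2 * 2 ^ k \<le> L" "L \<le> 3 * 2 ^ k - 1"
    by auto
  then have "2 * 2 ^ k \<le> L" "L < 3 * 2 ^ k"
    using one_le_power[of "2::nat" k] by linarith+
  then have "complexity L + 3 \<le> complexity (Suc L)"
    by (rule complexity_Suc_ge_3[OF \<open>1 \<le> k\<close>])
  then show "int (complexity (L + 1)) - int (complexity L) \<ge> 3"
    by simp
qed

end
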